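(* For the undirected greedy routing network creation game: (i) on any finite point set in $\mathbb R^D$ ($D\ge1$) with the Euclidean metric, every pure Nash equilibrium $\mathbf s$ satisfies $c(\mathbf s)\le\left(2-\frac{1}{K(D)}\right)c(\mathbf s^* )$; (ii) on any finite point set of $n\ge2$ points in an arbitrary metric space, every pure Nash equilibrium $\mathbf s$ satisfies $c(\mathbf s)<2\,c(\mathbf s^* )$. Here $\mathbf s^*$ denotes a social optimum.
   Context: Undirected variant of the game: $\mathcal P$ is a finite set of points (agents) with metric $d$; each agent $u$ chooses a strategy $S_u\subseteq\{\{u,v\}:v\in\mathcal P\setminus\{u\}\}$ of undirected edges, which it owns; a profile $\mathbf s$ induces the network $G(\mathbf s)$ on $\mathcal P$ in which $\{u,v\}$ is an edge iff $\{u,v\}\in S_u\cup S_v$. A greedy routing path from $u$ to $w$ is a path $(x_1=u,\dots,x_j=w)$ in $G(\mathbf s)$ with $d(x_i,w)>d(x_{i+1},w)$ for all $i$; $u$ is greedy connected if it has a greedy routing path to every other agent. The cost of $u$ is $c_u(\mathbf s)=|S_u|$ if $u$ is greedy connected and $\infty$ otherwise; social cost $c(\mathbf s)=\sum_u c_u(\mathbf s)$. A pure Nash equilibrium is a profile where no agent can strictly decrease its cost by a unilateral deviation; a social optimum minimizes social cost. $K(D)$ is the kissing number of $\mathbb R^D$: the maximum number of pairwise disjoint (interior-disjoint) unit balls in $\mathbb R^D$ that can simultaneously touch a fixed unit ball; equivalently, the maximum number of points on the unit sphere of $\mathbb R^D$ with pairwise angular distance at least $60^\circ$. *)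

theory Defs
  imports "HOL-Analysis.Analysis" "HOL-Library.Extended_Real"
begin

text \<open>Kissing number K(D) of R^D, where R^D is represented by a euclidean_space type
  'a with DIM('a) = D: the maximum number of points on the unit sphere with pairwise
  angular distance at least 60 degrees (pi/3).\<close>
definition kissing_number :: "'a::euclidean_space itself \<Rightarrow> nat" where
  "kissing_number _ = Max {card S | S :: 'a set. finite S \<and> S \<subseteq> sphere 0 1 \<and>
       (\<forall>u\<in>S. \<forall>v\<in>S. u \<noteq> v \<longrightarrow> arccos (inner u v) \<ge> pi / 3)}"

definition metric_on :: "'a set \<Rightarrow> ('a \<Rightarrow> 'a \<Rightarrow> real) \<Rightarrow> bool" where
  "metric_on P d \<longleftrightarrow>
     (\<forall>x\<in>P. \<forall>y\<in>P. d x y \<ge> 0 \<and> (d x y = 0 \<longleftrightarrow> x = y) \<and> d x y = d y x) \<and>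
     (\<forall>x\<in>P. \<forall>y\<in>P. \<forall>z\<in>P. d x z \<le> d x y + d y z)"

text \<open>Strategy profiles: s u is the set of undirected edges (2-element sets) owned by u.\<close>
definition valid_strategy :: "'a set \<Rightarrow> 'a \<Rightarrow> 'a set set \<Rightarrow> bool" where
  "valid_strategy P u S \<longleftrightarrow> S \<subseteq> {{u, v} | v. v \<in> P \<and> v \<noteq> u}"

definition valid_profile :: "'a set \<Rightarrow> ('a \<Rightarrow> 'a set set) \<Rightarrow> bool" where
  "valid_profile P s \<longleftrightarrow> (\<forall>u\<in>P. valid_strategy P u (s u))"

definition is_edge :: "'a set \<Rightarrow> ('a \<Rightarrow> 'a set set) \<Rightarrow> 'a \<Rightarrow> 'a \<Rightarrow> bool" where
  "is_edge P s a b \<longleftrightarrow> a \<in> P \<and> b \<in> P \<and> {a, b} \<in> s a \<union> s b"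

definition greedy_path :: "'a set \<Rightarrow> ('a \<Rightarrow> 'a \<Rightarrow> real) \<Rightarrow> ('a \<Rightarrow> 'a set set)
    \<Rightarrow> 'a \<Rightarrow> 'a \<Rightarrow> 'a list \<Rightarrow> bool" where
  "greedy_path P d s u w xs \<longleftrightarrow> xs \<noteq> [] \<and> hd xs = u \<and> last xs = w \<and> set xs \<subseteq> P \<and>
     (\<forall>i. i + 1 < length xs \<longrightarrow>
        is_edge P s (xs ! i) (xs ! (i + 1)) \<and> d (xs ! i) w > d (xs ! (i + 1)) w)"

definition greedy_connected :: "'a set \<Rightarrow> ('a \<Rightarrow> 'a \<Rightarrow> real) \<Rightarrow> ('a \<Rightarrow> 'a set set) \<Rightarrow> 'a \<Rightarrow> bool" where
  "greedy_connected P d s u \<longleftrightarrow> (\<forall>w\<in>P - {u}. \<exists>xs. greedy_path P d s u w xs)"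

definition agent_cost :: "'a set \<Rightarrow> ('a \<Rightarrow> 'a \<Rightarrow> real) \<Rightarrow> ('a \<Rightarrow> 'a set set) \<Rightarrow> 'a \<Rightarrow> ereal" where
  "agent_cost P d s u = (if greedy_connected P d s u then ereal (real (card (s u))) else \<infinity>)"

definition social_cost :: "'a set \<Rightarrow> ('a \<Rightarrow> 'a \<Rightarrow> real) \<Rightarrow> ('a \<Rightarrow> 'a set set) \<Rightarrow> ereal" where
  "social_cost P d s = (\<Sum>u\<in>P. agent_cost P d s u)"

definition nash_equilibrium :: "'a set \<Rightarrow> ('a \<Rightarrow> 'a \<Rightarrow> real) \<Rightarrow> ('a \<Rightarrow> 'a set set) \<Rightarrow> bool" where
  "nash_equilibrium P d s \<longleftrightarrow> valid_profile P s \<and>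
     (\<forall>u\<in>P. \<forall>S. valid_strategy P u S \<longrightarrow> agent_cost P d s u \<le> agent_cost P d (s(u := S)) u)"

definition social_optimum :: "'a set \<Rightarrow> ('a \<Rightarrow> 'a \<Rightarrow> real) \<Rightarrow> ('a \<Rightarrow> 'a set set) \<Rightarrow> bool" where
  "social_optimum P d s \<longleftrightarrow> valid_profile P s \<and>
     (\<forall>s'. valid_profile P s' \<longrightarrow> social_cost P d s \<le> social_cost P d s')"

end

theory Submission
  imports Defs
begin

text \<open>
  In a Nash equilibrium every agent u is greedy connected, so u cannot gain by buying edges
  to all members of a greedy cover C of u, i.e. a set containing, for every other agent w,
  some agent closer to w than u. Hence u owns at most as many edges as there are members
  of C that did not already buy an edge to u. The neighbourhood of u in a social optimum is
  such a cover, and the optimum has at most twice its cost in edge ends. The edge between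
  an agent and its nearest neighbour is present in every greedy connected network; whoever
  does not pay for it gets a credit, there are at least n / 2 credits, and they are saved in
  the bound: c(s) \<le> 2 c(s*) - n / 2. In Euclidean space u also has a cover containing
  these nearest-neighbour partners whose directions from u pairwise make angles of at least
  60 degrees, so it has at most K(D) members; interpolating between the two local bounds
  gives the factor 2 - 1 / K(D).
\<close>

lemma is_edge_commute: "is_edge P s a b \<longleftrightarrow> is_edge P s b a"
  unfolding is_edge_def by (auto simp: insert_commute)

lemma valid_profile_no_loop: "valid_profile P s \<Longrightarrow> \<not> is_edge P s u u"
  unfolding valid_profile_def valid_strategy_def is_edge_def by auto

lemma metric_on_dist_less:
  "metric_on P d \<Longrightarrow> u \<in> P \<Longrightarrow> w \<in> P \<Longrightarrow> u \<noteq> w \<Longrightarrow> d w w < d u w"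
  unfolding metric_on_def by (metis order_le_less)

lemma metric_on_commute: "metric_on P d \<Longrightarrow> a \<in> P \<Longrightarrow> b \<in> P \<Longrightarrow> d a b = d b a"
  unfolding metric_on_def by blast

lemma greedy_path_singleton: "w \<in> P \<Longrightarrow> greedy_path P d s w w [w]"
  unfolding greedy_path_def by auto

lemma greedy_path_dist_le:
  assumes path: "greedy_path P d s u w xs" and x: "x \<in> set xs"
  shows "d x w \<le> d u w"
proof -
  have "d (xs ! i) w \<le> d (xs ! 0) w" if "i < length xs" for i
    using that
  proof (induction i)
    case (Suc i)
    then have "d (xs ! Suc i) w < d (xs ! i) w"
      using path unfolding greedy_path_def by (metis Suc_eq_plus1)
    with Suc show ?case by simp
  qed simp
  moreover have "xs ! 0 = u"
    using path unfolding greedy_path_def by (auto simp: hd_conv_nth)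
  ultimately show ?thesis
    using x by (metis in_set_conv_nth)
qed

lemma greedy_path_first_step:
  assumes path: "greedy_path P d s u w xs" and "u \<noteq> w"
  obtains v where "v \<in> P" "is_edge P s u v" "d v w < d u w"
proof -
  obtain ys where xs: "xs = u # ys"
    using path unfolding greedy_path_def by (cases xs) auto
  with path \<open>u \<noteq> w\<close> have "0 + 1 < length xs"
    unfolding greedy_path_def by (cases ys) auto
  with path have "is_edge P s (xs ! 0) (xs ! (0 + 1)) \<and> d (xs ! (0 + 1)) w < d (xs ! 0) w"
    unfolding greedy_path_def by blast
  then have "is_edge P s u (xs ! 1)" "d (xs ! 1) w < d u w"
    using xs by simp_all
  moreover have "xs ! 1 \<in> P"
    using calculation(1) unfolding is_edge_def by blast
  ultimately show thesis
    using that by blast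
qed

lemma greedy_path_Cons:
  assumes path: "greedy_path P d s v w ys" and "u \<in> P" and edge: "is_edge P s' u v"
    and closer: "d v w < d u w"
    and same: "\<And>x y. x \<in> set ys \<Longrightarrow> y \<in> set ys \<Longrightarrow> is_edge P s x y \<Longrightarrow> is_edge P s' x y"
  shows "greedy_path P d s' u w (u # ys)"
proof -
  have ys: "ys \<noteq> []" "ys ! 0 = v" "last ys = w" "set ys \<subseteq> P"
    using path unfolding greedy_path_def by (auto simp: hd_conv_nth)
  have steps: "\<forall>i. i + 1 < length ys \<longrightarrow>
      is_edge P s (ys ! i) (ys ! (i + 1)) \<and> d (ys ! (i + 1)) w < d (ys ! i) w"
    using path unfolding greedy_path_def by blast
  have "is_edge P s' ((u # ys) ! i) ((u # ys) ! (i + 1)) \<and> d ((u # ys) ! (i + 1)) w < d ((u # ys) ! i) w"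
    if "i + 1 < length (u # ys)" for i
  proof (cases i)
    case 0
    then show ?thesis
      using edge closer ys(2) by simp
  next
    case (Suc j)
    then have j: "j + 1 < length ys"
      using that by simp
    then have "ys ! j \<in> set ys" "ys ! (j + 1) \<in> set ys"
      by auto
    then show ?thesis
      using steps j same Suc by simp
  qed
  then show ?thesis
    unfolding greedy_path_def using ys \<open>u \<in> P\<close> by auto
qed

lemma greedy_connected_path:
  assumes "\<forall>x\<in>P. greedy_connected P d s x" "v \<in> P" "w \<in> P"
  obtains ys where "greedy_path P d s v w ys"
proof (cases "v = w")
  case True
  then show ?thesis
    using that[of "[w]"] greedy_path_singleton[OF assms(3)] by simp
next
  case False
  then have "w \<in> P - {v}"
    using assms(3) by simp
  then show ?thesis
    using that assms(1,2) unfolding greedy_connected_def by meson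
qed

definition full_strategy :: "'a set \<Rightarrow> 'a \<Rightarrow> 'a set set" where
  "full_strategy P u = {{u, v} | v. v \<in> P \<and> v \<noteq> u}"

lemma greedy_connected_full_strategy:
  assumes "metric_on P d" "u \<in> P" "s u = full_strategy P u"
  shows "greedy_connected P d s u"
  unfolding greedy_connected_def
proof
  fix w assume w: "w \<in> P - {u}"
  have "greedy_path P d s u w [u, w]"
    unfolding greedy_path_def is_edge_def using assms w metric_on_dist_less[OF assms(1), of u w]
    by (auto simp: full_strategy_def nth_Cons split: nat.splits)
  then show "\<exists>xs. greedy_path P d s u w xs" by blast
qed

lemma valid_strategy_full_strategy: "valid_strategy P u (full_strategy P u)"
  unfolding valid_strategy_def full_strategy_def by (rule order_refl)

lemma nash_equilibrium_greedy_connected: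
  assumes "metric_on P d" "nash_equilibrium P d s" "u \<in> P"
  shows "greedy_connected P d s u"
proof -
  let ?s' = "s(u := full_strategy P u)"
  have "agent_cost P d s u \<le> agent_cost P d ?s' u"
    using assms(2,3) valid_strategy_full_strategy[of P u]
    unfolding nash_equilibrium_def by (simp only: Ball_def)
  also have "agent_cost P d ?s' u < \<infinity>"
    using greedy_connected_full_strategy[OF assms(1,3), of ?s'] unfolding agent_cost_def by simp
  finally show ?thesis
    unfolding agent_cost_def by (simp split: if_splits)
qed

lemma social_optimum_greedy_connected:
  assumes "finite P" "metric_on P d" "social_optimum P d s" "u \<in> P"
  shows "greedy_connected P d s u"
proof -
  have "valid_profile P (full_strategy P)"
    unfolding valid_profile_def by (simp add: valid_strategy_full_strategy)
  then have "social_cost P d s \<le> social_cost P d (full_strategy P)"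
    using assms(3) by (simp add: social_optimum_def)
  also have "social_cost P d (full_strategy P) < \<infinity>"
    using greedy_connected_full_strategy[OF assms(2)]
    unfolding social_cost_def agent_cost_def by (simp add: sum_Pinfty less_top[symmetric])
  finally have "agent_cost P d s u \<noteq> \<infinity>"
    using assms(1,4) unfolding social_cost_def by (simp add: sum_Pinfty less_top[symmetric])
  then show ?thesis
    unfolding agent_cost_def by (simp split: if_splits)
qed

lemma social_cost_eq_sum_card:
  assumes "\<forall>u\<in>P. greedy_connected P d s u"
  shows "social_cost P d s = ereal (\<Sum>u\<in>P. card (s u))"
  using assms unfolding social_cost_def agent_cost_def by simp

section \<open>Greedy covers\<close>

definition greedy_cover :: "'a set \<Rightarrow> ('a \<Rightarrow> 'a \<Rightarrow> real) \<Rightarrow> 'a \<Rightarrow> 'a set \<Rightarrow> bool" where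
  "greedy_cover P d u C \<longleftrightarrow> C \<subseteq> P - {u} \<and> (\<forall>w\<in>P - {u}. \<exists>v\<in>C. d v w < d u w)"

definition incoming :: "'a set \<Rightarrow> ('a \<Rightarrow> 'a set set) \<Rightarrow> 'a \<Rightarrow> 'a set" where
  "incoming P s u = {x\<in>P. {u, x} \<in> s x}"

lemma greedy_connected_adjacent_cover:
  assumes gc: "\<forall>x\<in>P. greedy_connected P d s x" and "u \<in> P" and cover: "greedy_cover P d u C"
    and adjacent: "\<forall>v\<in>C. is_edge P (s(u := S)) u v"
  shows "greedy_connected P d (s(u := S)) u"
  unfolding greedy_connected_def
proof
  fix w assume w: "w \<in> P - {u}"
  obtain v where v: "v \<in> C" "d v w < d u w"
    using cover w unfolding greedy_cover_def by blast
  then have "v \<in> P"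
    using cover unfolding greedy_cover_def by blast
  then obtain ys where ys: "greedy_path P d s v w ys"
    using greedy_connected_path[OF gc] w by blast
  have "x \<noteq> u" if "x \<in> set ys" for x
    using greedy_path_dist_le[OF ys that] v(2) by auto
  then have "is_edge P (s(u := S)) x y" if "x \<in> set ys" "y \<in> set ys" "is_edge P s x y" for x y
    using that unfolding is_edge_def by simp
  then have "greedy_path P d (s(u := S)) u w (u # ys)"
    using greedy_path_Cons[OF ys \<open>u \<in> P\<close> _ v(2)] adjacent v(1) by blast
  then show "\<exists>xs. greedy_path P d (s(u := S)) u w xs" ..
qed

lemma nash_card_strategy_le_cover:
  assumes "finite P" "metric_on P d" "nash_equilibrium P d s" "u \<in> P" "greedy_cover P d u C"
  shows "card (s u) \<le> card (C - incoming P s u)"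
proof -
  have gc: "\<forall>x\<in>P. greedy_connected P d s x"
    using nash_equilibrium_greedy_connected[OF assms(2,3)] by blast
  have C: "C \<subseteq> P - {u}"
    using assms(5) unfolding greedy_cover_def by simp
  then have "finite C"
    using assms(1) finite_subset by blast
  define T where "T = (\<lambda>v. {u, v}) ` (C - incoming P s u)"
  have "valid_strategy P u T"
    unfolding valid_strategy_def T_def using C by blast
  then have "agent_cost P d s u \<le> agent_cost P d (s(u := T)) u"
    using assms(3,4) unfolding nash_equilibrium_def by (simp only: Ball_def)
  moreover have "is_edge P (s(u := T)) u v" if "v \<in> C" for v
  proof -
    have "v \<in> P" "v \<noteq> u"
      using C that by auto
    moreover have "{u, v} \<in> T \<union> s v"
      using that \<open>v \<in> P\<close> unfolding T_def incoming_def by auto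
    ultimately show ?thesis
      using \<open>u \<in> P\<close> unfolding is_edge_def by auto
  qed
  then have "greedy_connected P d (s(u := T)) u"
    using greedy_connected_adjacent_cover[OF gc \<open>u \<in> P\<close> assms(5)] by blast
  ultimately have "card (s u) \<le> card T"
    using gc \<open>u \<in> P\<close> unfolding agent_cost_def by simp
  also have "\<dots> \<le> card (C - incoming P s u)"
    unfolding T_def using \<open>finite C\<close> by (intro card_image_le) simp
  finally show ?thesis .
qed

lemma nash_card_strategy_add_incoming_le_cover:
  assumes "finite P" "metric_on P d" "nash_equilibrium P d s" "u \<in> P" "greedy_cover P d u C"
    and "B \<subseteq> C"
  shows "card (s u) + card (B \<inter> incoming P s u) \<le> card C"
proof -
  have "finite C"
    using assms(1,5) unfolding greedy_cover_def by (auto intro: finite_subset)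
  then have "card (C - incoming P s u) = card C - card (C \<inter> incoming P s u)"
    by (simp add: card_Diff_subset_Int)
  moreover have "card (B \<inter> incoming P s u) \<le> card (C \<inter> incoming P s u)"
    using \<open>finite C\<close> \<open>B \<subseteq> C\<close> by (intro card_mono) auto
  moreover have "card (C \<inter> incoming P s u) \<le> card C"
    using \<open>finite C\<close> by (intro card_mono) auto
  ultimately show ?thesis
    using nash_card_strategy_le_cover[OF assms(1-5)] by linarith
qed

definition neighbours :: "'a set \<Rightarrow> ('a \<Rightarrow> 'a set set) \<Rightarrow> 'a \<Rightarrow> 'a set" where
  "neighbours P s u = {x\<in>P. is_edge P s u x}"

lemma greedy_cover_neighbours:
  assumes "valid_profile P s" "greedy_connected P d s u" "u \<in> P"
  shows "greedy_cover P d u (neighbours P s u)"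
  unfolding greedy_cover_def
proof
  show "neighbours P s u \<subseteq> P - {u}"
    unfolding neighbours_def using valid_profile_no_loop[OF assms(1)] by auto
  show "\<forall>w\<in>P - {u}. \<exists>v\<in>neighbours P s u. d v w < d u w"
  proof
    fix w assume "w \<in> P - {u}"
    then obtain xs where "greedy_path P d s u w xs"
      using assms(2) unfolding greedy_connected_def by blast
    moreover have "u \<noteq> w"
      using \<open>w \<in> P - {u}\<close> by blast
    ultimately obtain v where "v \<in> P" "is_edge P s u v" "d v w < d u w"
      by (rule greedy_path_first_step)
    then show "\<exists>v\<in>neighbours P s u. d v w < d u w"
      unfolding neighbours_def by blast
  qed
qed

section \<open>Nearest neighbours and credits\<close>

definition nearest_neighbour_map :: "'a set \<Rightarrow> ('a \<Rightarrow> 'a \<Rightarrow> real) \<Rightarrow> ('a \<Rightarrow> 'a) \<Rightarrow> bool" where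
  "nearest_neighbour_map P d nn \<longleftrightarrow> (\<forall>w\<in>P. nn w \<in> P - {w} \<and> (\<forall>y\<in>P - {w}. d (nn w) w \<le> d y w))"

lemma nearest_neighbour_map_exists:
  assumes "finite P" "2 \<le> card P"
  obtains nn where "nearest_neighbour_map P d nn"
proof
  show "nearest_neighbour_map P d (\<lambda>w. arg_min_on (\<lambda>y. d y w) (P - {w}))"
    unfolding nearest_neighbour_map_def
  proof
    fix w
    have "P - {w} \<noteq> {}"
    proof
      assume "P - {w} = {}"
      then have "card P \<le> card {w}"
        by (intro card_mono) auto
      with assms(2) show False
        by simp
    qed
    moreover have "finite (P - {w})"
      using assms(1) by simp
    ultimately show "arg_min_on (\<lambda>y. d y w) (P - {w}) \<in> P - {w} \<and>
        (\<forall>y\<in>P - {w}. d (arg_min_on (\<lambda>y. d y w) (P - {w})) w \<le> d y w)"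
      using arg_min_if_finite(1) arg_min_least by metis
  qed
qed

lemma greedy_connected_nearest_edge:
  assumes "greedy_connected P d s x" "x \<in> P - {w}" "w \<in> P"
    and nearest: "\<forall>y\<in>P - {w}. d x w \<le> d y w"
  shows "is_edge P s x w"
proof -
  obtain xs where "greedy_path P d s x w xs"
    using assms(1-3) unfolding greedy_connected_def by blast
  moreover have "x \<noteq> w"
    using assms(2) by blast
  ultimately obtain v where v: "v \<in> P" "is_edge P s x v" "d v w < d x w"
    by (rule greedy_path_first_step)
  then have "v = w"
    using nearest by force
  then show ?thesis
    using v by simp
qed

lemma nearest_neighbour_edge:
  assumes "nearest_neighbour_map P d nn" "\<forall>x\<in>P. greedy_connected P d s x" "w \<in> P"
  shows "is_edge P s (nn w) w"
proof (rule greedy_connected_nearest_edge)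
  show "nn w \<in> P - {w}" "\<forall>y\<in>P - {w}. d (nn w) w \<le> d y w"
    using assms(1,3) unfolding nearest_neighbour_map_def by auto
  then show "greedy_connected P d s (nn w)"
    using assms(2) by blast
qed (fact assms(3))

definition nn_adjacent :: "'a set \<Rightarrow> ('a \<Rightarrow> 'a) \<Rightarrow> 'a \<Rightarrow> 'a set" where
  "nn_adjacent P nn v = {x \<in> P - {v}. x = nn v \<or> nn x = v}"

lemma nn_adjacent_subset_neighbours:
  assumes "nearest_neighbour_map P d nn" "\<forall>x\<in>P. greedy_connected P d s x" "v \<in> P"
  shows "nn_adjacent P nn v \<subseteq> neighbours P s v"
proof
  fix x assume x: "x \<in> nn_adjacent P nn v"
  then have "x \<in> P"
    unfolding nn_adjacent_def by blast
  have "is_edge P s v x"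
  proof (cases "x = nn v")
    case True
    then show ?thesis
      using nearest_neighbour_edge[OF assms] is_edge_commute by metis
  next
    case False
    then have "nn x = v"
      using x unfolding nn_adjacent_def by blast
    then show ?thesis
      using nearest_neighbour_edge[OF assms(1,2) \<open>x \<in> P\<close>] by simp
  qed
  then show "x \<in> neighbours P s v"
    unfolding neighbours_def using \<open>x \<in> P\<close> by blast
qed

text \<open>The forced edge between w and nn w is bought by one endpoint and earns a credit at the
  other, and every credit is claimed by at most two agents.\<close>

lemma card_le_twice_sum_nn_credit:
  assumes "finite P" "nearest_neighbour_map P d nn" "\<forall>x\<in>P. greedy_connected P d s x"
  shows "card P \<le> 2 * (\<Sum>v\<in>P. card (nn_adjacent P nn v \<inter> incoming P s v))"
proof -
  define credit where "credit = (SIGMA v:P. nn_adjacent P nn v \<inter> incoming P s v)"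
  have "finite credit"
    unfolding credit_def using assms(1) by (auto simp: nn_adjacent_def)
  have "P \<subseteq> fst ` credit \<union> snd ` credit"
  proof
    fix w assume "w \<in> P"
    then have nn: "nn w \<in> P - {w}"
      using assms(2) unfolding nearest_neighbour_map_def by blast
    have "{nn w, w} \<in> s w \<or> {w, nn w} \<in> s (nn w)"
      using nearest_neighbour_edge[OF assms(2,3) \<open>w \<in> P\<close>] unfolding is_edge_def
      by (auto simp: insert_commute)
    then have "(nn w, w) \<in> credit \<or> (w, nn w) \<in> credit"
      using \<open>w \<in> P\<close> nn unfolding credit_def nn_adjacent_def incoming_def by auto
    then show "w \<in> fst ` credit \<union> snd ` credit"
      by force
  qed
  then have "card P \<le> card (fst ` credit \<union> snd ` credit)"
    using \<open>finite credit\<close> by (intro card_mono) auto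
  also have "\<dots> \<le> card (fst ` credit) + card (snd ` credit)"
    by (rule card_Un_le)
  also have "\<dots> \<le> 2 * card credit"
    using card_image_le[OF \<open>finite credit\<close>, of fst] card_image_le[OF \<open>finite credit\<close>, of snd]
    by linarith
  also have "card credit = (\<Sum>v\<in>P. card (nn_adjacent P nn v \<inter> incoming P s v))"
    unfolding credit_def using assms(1) by (intro card_SigmaI) (auto simp: nn_adjacent_def)
  finally show ?thesis .
qed

section \<open>Arbitrary metric spaces\<close>

lemma card_partners_le:
  assumes "finite S"
  shows "card {x \<in> A. {u, x} \<in> S} \<le> card S"
proof (rule card_inj_on_le)
  show "inj_on (\<lambda>x. {u, x}) {x \<in> A. {u, x} \<in> S}"
    by (auto intro!: inj_onI simp: doubleton_eq_iff)
qed (use assms in auto)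

lemma finite_valid_strategy: "finite P \<Longrightarrow> valid_strategy P u S \<Longrightarrow> finite S"
  unfolding valid_strategy_def by (rule finite_subset) auto

lemma sum_card_neighbours_le:
  assumes "finite P" "valid_profile P s"
  shows "(\<Sum>u\<in>P. card (neighbours P s u)) \<le> 2 * (\<Sum>u\<in>P. card (s u))"
proof -
  let ?out = "\<lambda>u. {x \<in> P. {u, x} \<in> s u}"
  have "card (neighbours P s u) \<le> card (?out u) + card (incoming P s u)" if "u \<in> P" for u
  proof -
    have "neighbours P s u = ?out u \<union> incoming P s u"
      unfolding neighbours_def incoming_def is_edge_def using that by auto
    then show ?thesis
      by (simp add: card_Un_le)
  qed
  then have "(\<Sum>u\<in>P. card (neighbours P s u)) \<le> (\<Sum>u\<in>P. card (?out u) + card (incoming P s u))"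
    by (rule sum_mono)
  also have "\<dots> = (\<Sum>u\<in>P. card (?out u)) + (\<Sum>u\<in>P. card (incoming P s u))"
    by (rule sum.distrib)
  finally have neighbours_le: "(\<Sum>u\<in>P. card (neighbours P s u)) \<le>
      (\<Sum>u\<in>P. card (?out u)) + (\<Sum>u\<in>P. card (incoming P s u))" .
  have "(\<Sum>u\<in>P. card (incoming P s u)) = card (SIGMA u:P. incoming P s u)"
    using assms(1) unfolding incoming_def by simp
  also have "\<dots> = card (prod.swap ` (SIGMA u:P. incoming P s u))"
    by (simp add: card_image)
  also have "prod.swap ` (SIGMA u:P. incoming P s u) = (SIGMA x:P. ?out x)"
    unfolding incoming_def by (auto simp: image_iff insert_commute)
  also have "card \<dots> = (\<Sum>x\<in>P. card (?out x))"
    using assms(1) by simp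
  finally have incoming_eq: "(\<Sum>u\<in>P. card (incoming P s u)) = (\<Sum>u\<in>P. card (?out u))" .
  have "(\<Sum>u\<in>P. card (?out u)) \<le> (\<Sum>u\<in>P. card (s u))"
  proof (rule sum_mono)
    fix u assume "u \<in> P"
    then have "finite (s u)"
      using assms finite_valid_strategy[of P u] unfolding valid_profile_def by simp
    then show "card (?out u) \<le> card (s u)"
      by (rule card_partners_le)
  qed
  with neighbours_le incoming_eq show ?thesis
    by linarith
qed

lemma nash_card_strategy_add_credit_le_degree:
  assumes "finite P" "metric_on P d" "nash_equilibrium P d s" "nearest_neighbour_map P d nn"
    and "valid_profile P s'" "\<forall>x\<in>P. greedy_connected P d s' x" "u \<in> P"
  shows "card (s u) + card (nn_adjacent P nn u \<inter> incoming P s u) \<le> card (neighbours P s' u)"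
proof (rule nash_card_strategy_add_incoming_le_cover[OF assms(1-3,7)])
  show "greedy_cover P d u (neighbours P s' u)"
    using assms(5-7) by (intro greedy_cover_neighbours) auto
  show "nn_adjacent P nn u \<subseteq> neighbours P s' u"
    by (rule nn_adjacent_subset_neighbours[OF assms(4,6,7)])
qed

lemma nash_social_cost_less_twice_optimum:
  assumes "finite P" "2 \<le> card P" "metric_on P d" "nash_equilibrium P d s" "social_optimum P d s'"
  shows "social_cost P d s < 2 * social_cost P d s'"
proof -
  have gc: "\<forall>x\<in>P. greedy_connected P d s x"
    using nash_equilibrium_greedy_connected[OF assms(3,4)] by blast
  have gc': "\<forall>x\<in>P. greedy_connected P d s' x"
    using social_optimum_greedy_connected[OF assms(1,3,5)] by blast
  have valid': "valid_profile P s'"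
    using assms(5) unfolding social_optimum_def by simp
  obtain nn where nn: "nearest_neighbour_map P d nn"
    using nearest_neighbour_map_exists[OF assms(1,2)] .
  define credit where "credit u = card (nn_adjacent P nn u \<inter> incoming P s u)" for u
  have "(\<Sum>u\<in>P. card (s u)) + (\<Sum>u\<in>P. credit u) \<le> (\<Sum>u\<in>P. card (neighbours P s' u))"
    unfolding credit_def sum.distrib[symmetric]
    by (intro sum_mono nash_card_strategy_add_credit_le_degree[OF assms(1,3,4) nn valid' gc'])
  moreover have "(\<Sum>u\<in>P. card (neighbours P s' u)) \<le> 2 * (\<Sum>u\<in>P. card (s' u))"
    by (rule sum_card_neighbours_le[OF assms(1) valid'])
  moreover have "card P \<le> 2 * (\<Sum>u\<in>P. credit u)"
    unfolding credit_def by (rule card_le_twice_sum_nn_credit[OF assms(1) nn gc])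
  ultimately have "(\<Sum>u\<in>P. card (s u)) < 2 * (\<Sum>u\<in>P. card (s' u))"
    using assms(2) by linarith
  then have "real (\<Sum>u\<in>P. card (s u)) < 2 * real (\<Sum>u\<in>P. card (s' u))"
    by linarith
  then show ?thesis
    unfolding social_cost_eq_sum_card[OF gc] social_cost_eq_sum_card[OF gc'] by simp
qed

section \<open>Separated covers and the kissing number\<close>

text \<open>For the Euclidean distance this says that every angle x v y is at least 60 degrees,
  since x y is a longest side of the triangle v x y.\<close>

definition separated_around :: "('a \<Rightarrow> 'a \<Rightarrow> real) \<Rightarrow> 'a \<Rightarrow> 'a set \<Rightarrow> bool" where
  "separated_around d v C \<longleftrightarrow> (\<forall>x\<in>C. \<forall>y\<in>C. x \<noteq> y \<longrightarrow> d v x \<le> d x y)"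

lemma separated_around_Un:
  assumes "separated_around d v B" "separated_around d v C"
    and "\<And>x y. x \<in> B \<Longrightarrow> y \<in> C \<Longrightarrow> x \<noteq> y \<Longrightarrow> d v x \<le> d x y \<and> d v y \<le> d y x"
  shows "separated_around d v (B \<union> C)"
  using assms unfolding separated_around_def by (metis Un_iff)

lemma separated_greedy_cover_exists:
  assumes "metric_on P d" "v \<in> P" "finite U" "U \<subseteq> P - {v}"
  shows "\<exists>C\<subseteq>U. (\<forall>w\<in>U. \<exists>c\<in>C. d c w < d v w) \<and> separated_around d v C"
  using assms(3,4)
proof (induction U rule: finite_psubset_induct)
  case (psubset U)
  show ?case
  proof (cases "U = {}")
    case True
    then show ?thesis
      unfolding separated_around_def by simp
  next
    case False
    define x where "x = arg_min_on (d v) U"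
    have x: "x \<in> U" "\<forall>y\<in>U. d v x \<le> d v y"
      unfolding x_def using psubset.hyps False by (simp_all add: arg_min_if_finite(1) arg_min_least)
    define U' where "U' = {w\<in>U. d v w \<le> d x w}"
    have "x \<in> P - {v}"
      using x psubset.prems by blast
    then have "x \<notin> U'"
      unfolding U'_def using metric_on_dist_less[OF assms(1,2)] by fastforce
    then have "U' \<subset> U"
      unfolding U'_def using x(1) by blast
    moreover have "U' \<subseteq> P - {v}"
      using \<open>U' \<subset> U\<close> psubset.prems by blast
    ultimately obtain C' where
      C': "C' \<subseteq> U'" "\<forall>w\<in>U'. \<exists>c\<in>C'. d c w < d v w" "separated_around d v C'"
      using psubset.IH by meson
    have "\<forall>w\<in>U. \<exists>c\<in>insert x C'. d c w < d v w"
      using C'(2) unfolding U'_def by force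
    moreover have "d v x \<le> d x y \<and> d v y \<le> d y x" if "y \<in> C'" for y
    proof -
      have "d x y = d y x"
        using metric_on_commute[OF assms(1)] \<open>x \<in> P - {v}\<close> that C'(1) \<open>U' \<subseteq> P - {v}\<close> by blast
      then show ?thesis
        using that x C'(1) unfolding U'_def by fastforce
    qed
    then have "separated_around d v ({x} \<union> C')"
      by (intro separated_around_Un C'(3)) (auto simp: separated_around_def)
    moreover have "insert x C' \<subseteq> U"
      using x(1) C'(1) \<open>U' \<subset> U\<close> by blast
    ultimately show ?thesis
      by (metis insert_is_Un)
  qed
qed

lemma nn_adjacent_dist_le:
  assumes "metric_on P d" "nearest_neighbour_map P d nn" "v \<in> P" "x \<in> nn_adjacent P nn v"
    and "y \<in> P - {v, x}" "d v y \<le> d x y"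
  shows "d v x \<le> d x y"
proof -
  have "x \<in> P"
    using assms(4) unfolding nn_adjacent_def by blast
  have sym: "d v x = d x v" "d v y = d y v" "d x y = d y x"
    using metric_on_commute[OF assms(1)] assms(3,5) \<open>x \<in> P\<close> by auto
  show ?thesis
  proof (cases "x = nn v")
    case True
    then have "d x v \<le> d y v"
      using assms(2,3,5) unfolding nearest_neighbour_map_def by blast
    then show ?thesis
      using assms(6) sym by linarith
  next
    case False
    then have "nn x = v"
      using assms(4) unfolding nn_adjacent_def by blast
    then have "d v x \<le> d y x"
      using assms(2,5) \<open>x \<in> P\<close> unfolding nearest_neighbour_map_def by force
    then show ?thesis
      using sym by linarith
  qed
qed

lemma separated_around_nn_adjacent:
  assumes "metric_on P d" "nearest_neighbour_map P d nn" "v \<in> P"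
  shows "separated_around d v (nn_adjacent P nn v)"
  unfolding separated_around_def
proof (intro ballI impI)
  fix x y assume xy: "x \<in> nn_adjacent P nn v" "y \<in> nn_adjacent P nn v" "x \<noteq> y"
  then have "x \<in> P - {v}" "y \<in> P - {v}"
    unfolding nn_adjacent_def by auto
  have "d x y = d y x"
    using metric_on_commute[OF assms(1)] \<open>x \<in> P - {v}\<close> \<open>y \<in> P - {v}\<close> by blast
  show "d v x \<le> d x y"
  proof (cases "nn y = v")
    case True
    then have "d v y \<le> d x y"
      using assms(2) \<open>x \<in> P - {v}\<close> \<open>y \<in> P - {v}\<close> xy(3)
      unfolding nearest_neighbour_map_def by force
    then show ?thesis
      using nn_adjacent_dist_le[OF assms xy(1)] \<open>y \<in> P - {v}\<close> xy(3) by blast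
  next
    case False
    then have "nn x = v"
      using xy unfolding nn_adjacent_def by auto
    then show ?thesis
      using assms(2) \<open>x \<in> P - {v}\<close> \<open>y \<in> P - {v}\<close> xy(3) \<open>d x y = d y x\<close>
      unfolding nearest_neighbour_map_def by force
  qed
qed

lemma separated_greedy_cover_extending_nn_adjacent:
  assumes "finite P" "metric_on P d" "nearest_neighbour_map P d nn" "v \<in> P"
  obtains C where "greedy_cover P d v C" "nn_adjacent P nn v \<subseteq> C" "separated_around d v C"
proof -
  let ?B = "nn_adjacent P nn v"
  define U where "U = {w \<in> P - {v}. \<forall>b\<in>?B. d v w \<le> d b w}"
  have B: "?B \<subseteq> P - {v}"
    unfolding nn_adjacent_def by auto
  have "U \<subseteq> P - {v}" "finite U"
    unfolding U_def using assms(1) by auto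
  then obtain C' where
    C': "C' \<subseteq> U" "\<forall>w\<in>U. \<exists>c\<in>C'. d c w < d v w" "separated_around d v C'"
    using separated_greedy_cover_exists[OF assms(2,4)] by meson
  have "\<exists>c\<in>?B \<union> C'. d c w < d v w" if "w \<in> P - {v}" for w
  proof (cases "\<exists>b\<in>?B. d b w < d v w")
    case False
    then have "w \<in> U"
      unfolding U_def using that by (auto simp: not_less)
    then show ?thesis
      using C'(2) by blast
  qed blast
  then have "greedy_cover P d v (?B \<union> C')"
    unfolding greedy_cover_def using B C'(1) \<open>U \<subseteq> P - {v}\<close> by blast
  moreover have "d v x \<le> d x y \<and> d v y \<le> d y x" if "x \<in> ?B" "y \<in> C'" "x \<noteq> y" for x y
  proof -
    have y: "y \<in> P - {v, x}"
      using that C'(1) \<open>U \<subseteq> P - {v}\<close> by auto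
    have "d v y \<le> d x y"
      using that C'(1) unfolding U_def by auto
    moreover have "d x y = d y x"
      using metric_on_commute[OF assms(2)] y that(1) B by blast
    ultimately show ?thesis
      using nn_adjacent_dist_le[OF assms(2-4) that(1) y] by simp
  qed
  then have "separated_around d v (?B \<union> C')"
    using separated_around_nn_adjacent[OF assms(2-4)] C'(3) by (intro separated_around_Un)
  ultimately show thesis
    using that by blast
qed

lemma compact_separated_card_bounded:
  fixes K :: "'a::metric_space set"
  assumes "compact K" "0 < e"
  obtains N where "\<And>S. S \<subseteq> K \<Longrightarrow> \<forall>x\<in>S. \<forall>y\<in>S. x \<noteq> y \<longrightarrow> e \<le> dist x y \<Longrightarrow> finite S \<and> card S \<le> N"
proof -
  obtain k where k: "finite k" "K \<subseteq> (\<Union>c\<in>k. ball c (e / 2))"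
    using assms compact_eq_totally_bounded by (metis half_gt_zero)
  have "finite S \<and> card S \<le> card k"
    if S: "S \<subseteq> K" "\<forall>x\<in>S. \<forall>y\<in>S. x \<noteq> y \<longrightarrow> e \<le> dist x y" for S
  proof -
    define centre where "centre x = (SOME c. c \<in> k \<and> dist c x < e / 2)" for x
    have centre: "centre x \<in> k \<and> dist (centre x) x < e / 2" if x: "x \<in> S" for x
    proof -
      obtain c where "c \<in> k" "x \<in> ball c (e / 2)"
        using x S(1) k(2) by blast
      then have "\<exists>c. c \<in> k \<and> dist c x < e / 2"
        by auto
      then show ?thesis
        unfolding centre_def by (rule someI_ex)
    qed
    have "inj_on centre S"
    proof (rule inj_onI, rule ccontr)
      fix x y assume "x \<in> S" "y \<in> S" "centre x = centre y" "x \<noteq> y"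
      then have "dist x y < e"
        using centre[of x] centre[of y] dist_triangle_half_r[of "centre x" x e y] by simp
      with S(2) \<open>x \<in> S\<close> \<open>y \<in> S\<close> \<open>x \<noteq> y\<close> show False
        by fastforce
    qed
    moreover have "centre ` S \<subseteq> k"
      using centre by blast
    ultimately show ?thesis
      using k(1) by (meson card_inj_on_le inj_on_finite)
  qed
  then show thesis
    using that by blast
qed

lemma unit_vectors_dist_ge_1:
  fixes u w :: "'a::real_inner"
  assumes "norm u = 1" "norm w = 1" "pi / 3 \<le> arccos (inner u w)"
  shows "1 \<le> dist u w"
proof -
  have bounds: "-1 \<le> inner u w" "inner u w \<le> 1"
    using Cauchy_Schwarz_ineq2[of u w] assms(1,2) by (simp_all add: abs_le_iff)
  have "cos (arccos (inner u w)) \<le> cos (pi / 3)"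
    using assms(3) arccos_ubound[OF bounds] by (intro cos_monotone_0_pi_le) auto
  then have "inner u w \<le> 1 / 2"
    using bounds by (simp add: cos_60)
  moreover have "(dist u w)\<^sup>2 = (norm u)\<^sup>2 + (norm w)\<^sup>2 - 2 * inner u w"
    by (simp add: dist_norm dot_norm_neg field_simps)
  ultimately have "1 \<le> (dist u w)\<^sup>2"
    using assms(1,2) by simp
  then show ?thesis
    by (rule power2_le_imp_le[of 1, simplified]) simp
qed

lemma card_le_kissing_number:
  fixes S :: "'a::euclidean_space set"
  assumes "finite S" "S \<subseteq> sphere 0 1" "\<forall>u\<in>S. \<forall>v\<in>S. u \<noteq> v \<longrightarrow> pi / 3 \<le> arccos (inner u v)"
  shows "card S \<le> kissing_number TYPE('a)"
proof -
  let ?configurations = "{card T | T :: 'a set. finite T \<and> T \<subseteq> sphere 0 1 \<and>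
      (\<forall>u\<in>T. \<forall>v\<in>T. u \<noteq> v \<longrightarrow> arccos (inner u v) \<ge> pi / 3)}"
  obtain N where N: "\<And>T. T \<subseteq> sphere (0::'a) 1 \<Longrightarrow> \<forall>x\<in>T. \<forall>y\<in>T. x \<noteq> y \<longrightarrow> 1 \<le> dist x y \<Longrightarrow>
      finite T \<and> card T \<le> N"
    using compact_separated_card_bounded[OF compact_sphere zero_less_one] by blast
  have "?configurations \<subseteq> {..N}"
    using N unit_vectors_dist_ge_1 by fastforce
  then have "finite ?configurations"
    by (rule finite_subset) simp
  moreover have "card S \<in> ?configurations"
    using assms by blast
  ultimately show ?thesis
    unfolding kissing_number_def by (rule Max_ge)
qed

lemma inner_sgn_le_half:
  fixes a b :: "'a::real_inner"
  assumes "a \<noteq> 0" "b \<noteq> 0" "norm a \<le> norm (a - b)" "norm b \<le> norm (a - b)"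
  shows "inner (sgn a) (sgn b) \<le> 1 / 2"
proof -
  have "2 * inner a b = (norm a)\<^sup>2 + (norm b)\<^sup>2 - (norm (a - b))\<^sup>2"
    by (simp add: dot_norm_neg)
  moreover have "(norm a)\<^sup>2 \<le> (norm (a - b))\<^sup>2" "(norm b)\<^sup>2 \<le> (norm (a - b))\<^sup>2"
    using assms(3,4) by (simp_all add: power_mono)
  ultimately have bounds: "2 * inner a b \<le> (norm a)\<^sup>2" "2 * inner a b \<le> (norm b)\<^sup>2"
    by linarith+
  have "2 * inner a b \<le> norm a * norm b"
  proof (cases "norm a \<le> norm b")
    case True
    then have "(norm a)\<^sup>2 \<le> norm a * norm b"
      by (simp add: power2_eq_square mult_left_mono)
    with bounds(1) show ?thesis
      by linarith
  next
    case False
    then have "(norm b)\<^sup>2 \<le> norm a * norm b"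
      by (simp add: power2_eq_square mult_right_mono)
    with bounds(2) show ?thesis
      by linarith
  qed
  moreover have "inner (sgn a) (sgn b) = inner a b / (norm a * norm b)"
    using assms(1,2) by (simp add: sgn_div_norm field_simps)
  ultimately show ?thesis
    using assms(1,2) by (simp add: divide_le_eq)
qed

lemma pi_div_3_le_arccos:
  fixes u w :: "'a::real_inner"
  assumes "norm u = 1" "norm w = 1" "inner u w \<le> 1 / 2"
  shows "pi / 3 \<le> arccos (inner u w)"
proof -
  have "\<bar>inner u w\<bar> \<le> 1"
    using Cauchy_Schwarz_ineq2[of u w] assms(1,2) by simp
  then have "arccos (1 / 2) \<le> arccos (inner u w)"
    using assms(3) by (intro arccos_le_arccos) auto
  then show ?thesis
    by simp
qed

lemma card_separated_le_kissing_number: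
  fixes v :: "'a::euclidean_space"
  assumes "finite C" "v \<notin> C" "separated_around dist v C"
  shows "card C \<le> kissing_number TYPE('a)"
proof -
  let ?direction = "\<lambda>x. sgn (x - v)"
  have unit: "norm (?direction x) = 1" if "x \<in> C" for x
    using assms(2) that by (auto simp: norm_sgn)
  have half: "inner (?direction x) (?direction y) \<le> 1 / 2" if "x \<in> C" "y \<in> C" "x \<noteq> y" for x y
  proof (rule inner_sgn_le_half)
    show "x - v \<noteq> 0" "y - v \<noteq> 0"
      using assms(2) that by auto
    have "dist v x \<le> dist x y" "dist v y \<le> dist y x"
      using assms(3) that unfolding separated_around_def by auto
    then show "norm (x - v) \<le> norm (x - v - (y - v))" "norm (y - v) \<le> norm (x - v - (y - v))"
      by (simp_all add: dist_norm norm_minus_commute)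
  qed
  have "inj_on ?direction C"
  proof (rule inj_onI, rule ccontr)
    fix x y assume "x \<in> C" "y \<in> C" "?direction x = ?direction y" "x \<noteq> y"
    then have "inner (?direction x) (?direction x) \<le> 1 / 2"
      using half by metis
    with unit[OF \<open>x \<in> C\<close>] show False
      by (simp add: power2_norm_eq_inner[symmetric])
  qed
  then have "card C = card (?direction ` C)"
    by (simp add: card_image)
  also have "\<dots> \<le> kissing_number TYPE('a)"
  proof (rule card_le_kissing_number)
    show "finite (?direction ` C)" "?direction ` C \<subseteq> sphere 0 1"
      using assms(1) unit by auto
    show "\<forall>u\<in>?direction ` C. \<forall>w\<in>?direction ` C. u \<noteq> w \<longrightarrow> pi / 3 \<le> arccos (inner u w)"
    proof (intro ballI impI)
      fix a b assume "a \<in> ?direction ` C" "b \<in> ?direction ` C" "a \<noteq> b"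
      then obtain x y where "x \<in> C" "y \<in> C" "x \<noteq> y" "a = ?direction x" "b = ?direction y"
        by auto
      then show "pi / 3 \<le> arccos (inner a b)"
        using pi_div_3_le_arccos[OF unit unit half] by simp
    qed
  qed
  finally show ?thesis .
qed

section \<open>Euclidean point sets\<close>

text \<open>The chord of min n K from (0, 1/2) to (K, K); it is the source of the 1 / K
  in the approximation factor.\<close>

lemma le_affine_bound_of_le_min:
  fixes x :: real and n K :: nat
  assumes "x \<le> real n" "x \<le> real K"
  shows "x \<le> (1 - 1 / (2 * real K)) * real n + 1 / 2"
proof (cases "n \<le> K")
  case True
  then have "real n / (2 * real K) \<le> 1 / 2"
    by (cases "K = 0") (simp_all add: divide_le_eq)
  with assms(1) show ?thesis
    by (simp add: algebra_simps)
next
  case False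
  show ?thesis
  proof (cases "K = 0")
    case True
    with assms(2) show ?thesis
      by simp
  next
    case False
    then have "(1 - 1 / (2 * real K)) * real K \<le> (1 - 1 / (2 * real K)) * real n"
      using \<open>\<not> n \<le> K\<close> by (intro mult_left_mono) (simp_all add: field_simps)
    moreover have "(1 - 1 / (2 * real K)) * real K + 1 / 2 = real K"
      using False by (simp add: algebra_simps)
    ultimately show ?thesis
      using assms(2) by linarith
  qed
qed

lemma sum_le_two_minus_inverse_bound:
  fixes a credit deg :: "'v \<Rightarrow> nat" and K m :: nat
  assumes local: "\<And>u. u \<in> P \<Longrightarrow> a u + credit u \<le> deg u" "\<And>u. u \<in> P \<Longrightarrow> a u + credit u \<le> K"
    and degrees: "(\<Sum>u\<in>P. deg u) \<le> 2 * m" and credits: "card P \<le> 2 * (\<Sum>u\<in>P. credit u)"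
  shows "real (\<Sum>u\<in>P. a u) \<le> (2 - 1 / real K) * real m"
proof -
  let ?c = "1 - 1 / (2 * real K)"
  have "0 \<le> ?c"
    by (cases "K = 0") (simp_all add: divide_le_eq)
  have "real (a u + credit u) \<le> ?c * real (deg u) + 1 / 2" if "u \<in> P" for u
    using local[OF that] by (intro le_affine_bound_of_le_min) simp_all
  then have "(\<Sum>u\<in>P. real (a u + credit u)) \<le> (\<Sum>u\<in>P. ?c * real (deg u) + 1 / 2)"
    by (rule sum_mono)
  then have "real (\<Sum>u\<in>P. a u) + real (\<Sum>u\<in>P. credit u) \<le>
      ?c * real (\<Sum>u\<in>P. deg u) + real (card P) / 2"
    by (simp add: sum.distrib sum_distrib_left)
  moreover have "?c * real (\<Sum>u\<in>P. deg u) \<le> ?c * (2 * real m)"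
    using degrees \<open>0 \<le> ?c\<close> by (intro mult_left_mono) (simp_all flip: of_nat_sum)
  moreover have "real (card P) \<le> 2 * real (\<Sum>u\<in>P. credit u)"
    using credits by (simp flip: of_nat_sum)
  moreover have "?c * (2 * real m) = (2 - 1 / real K) * real m"
    by (cases "K = 0") (simp_all add: field_simps)
  ultimately show ?thesis
    by linarith
qed

lemma metric_on_dist: "metric_on P dist"
  unfolding metric_on_def by (auto simp: dist_commute dist_triangle)

lemma nash_card_strategy_add_credit_le_kissing_number:
  fixes P :: "'a::euclidean_space set"
  assumes "finite P" "nash_equilibrium P dist s" "nearest_neighbour_map P dist nn" "u \<in> P"
  shows "card (s u) + card (nn_adjacent P nn u \<inter> incoming P s u) \<le> kissing_number TYPE('a)"
proof -
  obtain C where C: "greedy_cover P dist u C" "nn_adjacent P nn u \<subseteq> C" "separated_around dist u C"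
    using separated_greedy_cover_extending_nn_adjacent[OF assms(1) metric_on_dist assms(3,4)] .
  then have "finite C" "u \<notin> C"
    using assms(1) unfolding greedy_cover_def by (auto intro: finite_subset)
  have "card (s u) + card (nn_adjacent P nn u \<inter> incoming P s u) \<le> card C"
    by (rule nash_card_strategy_add_incoming_le_cover[OF assms(1) metric_on_dist assms(2,4) C(1,2)])
  also have "\<dots> \<le> kissing_number TYPE('a)"
    by (rule card_separated_le_kissing_number[OF \<open>finite C\<close> \<open>u \<notin> C\<close> C(3)])
  finally show ?thesis .
qed

lemma valid_profile_eq_empty_if_card_le_1:
  assumes "finite P" "card P \<le> 1" "valid_profile P s" "u \<in> P"
  shows "s u = {}"
proof -
  have "P \<subseteq> {u}"
    using assms(1,2,4) by (auto simp: card_le_Suc0_iff_eq)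
  then show ?thesis
    using assms(3,4) unfolding valid_profile_def valid_strategy_def by blast
qed

lemma nash_social_cost_le_kissing_bound:
  fixes P :: "'a::euclidean_space set"
  assumes "finite P" "nash_equilibrium P dist s" "social_optimum P dist s'"
  shows "social_cost P dist s \<le> ereal (2 - 1 / real (kissing_number TYPE('a))) * social_cost P dist s'"
proof -
  let ?K = "kissing_number TYPE('a)"
  have gc: "\<forall>x\<in>P. greedy_connected P dist s x"
    using nash_equilibrium_greedy_connected[OF metric_on_dist assms(2)] by blast
  have gc': "\<forall>x\<in>P. greedy_connected P dist s' x"
    using social_optimum_greedy_connected[OF assms(1) metric_on_dist assms(3)] by blast
  have valid: "valid_profile P s" and valid': "valid_profile P s'"
    using assms(2,3) unfolding nash_equilibrium_def social_optimum_def by simp_all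
  have "real (\<Sum>u\<in>P. card (s u)) \<le> (2 - 1 / real ?K) * real (\<Sum>u\<in>P. card (s' u))"
  proof (cases "2 \<le> card P")
    case False
    then have "(\<Sum>u\<in>P. card (s u)) = 0"
      using valid_profile_eq_empty_if_card_le_1[OF assms(1) _ valid] by simp
    moreover have "1 / real ?K \<le> 2"
      by (cases "?K = 0") (simp_all add: divide_le_eq)
    ultimately show ?thesis
      by (simp add: sum_nonneg)
  next
    case True
    obtain nn where nn: "nearest_neighbour_map P dist nn"
      using nearest_neighbour_map_exists[OF assms(1) True] .
    show ?thesis
    proof (rule sum_le_two_minus_inverse_bound[where deg = "\<lambda>u. card (neighbours P s' u)"
          and credit = "\<lambda>u. card (nn_adjacent P nn u \<inter> incoming P s u)"])
      show "card (s u) + card (nn_adjacent P nn u \<inter> incoming P s u) \<le> card (neighbours P s' u)"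
        if "u \<in> P" for u
        by (rule nash_card_strategy_add_credit_le_degree[OF assms(1) metric_on_dist assms(2) nn valid' gc' that])
      show "card (s u) + card (nn_adjacent P nn u \<inter> incoming P s u) \<le> ?K" if "u \<in> P" for u
        by (rule nash_card_strategy_add_credit_le_kissing_number[OF assms(1,2) nn that])
      show "(\<Sum>u\<in>P. card (neighbours P s' u)) \<le> 2 * (\<Sum>u\<in>P. card (s' u))"
        by (rule sum_card_neighbours_le[OF assms(1) valid'])
      show "card P \<le> 2 * (\<Sum>u\<in>P. card (nn_adjacent P nn u \<inter> incoming P s u))"
        by (rule card_le_twice_sum_nn_credit[OF assms(1) nn gc])
    qed
  qed
  then show ?thesis
    unfolding social_cost_eq_sum_card[OF gc] social_cost_eq_sum_card[OF gc'] by simp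
qed

theorem mainTheorem14:
  shows "(\<forall>(P :: 'a::euclidean_space set) s sopt.
            finite P \<and> nash_equilibrium P dist s \<and> social_optimum P dist sopt \<longrightarrow>
            social_cost P dist s \<le> ereal (2 - 1 / real (kissing_number TYPE('a))) * social_cost P dist sopt)
       \<and> (\<forall>(P :: 'b set) (d :: 'b \<Rightarrow> 'b \<Rightarrow> real) s sopt.
            finite P \<and> card P \<ge> 2 \<and> metric_on P d \<and> nash_equilibrium P d s \<and> social_optimum P d sopt \<longrightarrow>
            social_cost P d s < 2 * social_cost P d sopt)"
  using nash_social_cost_le_kissing_bound nash_social_cost_less_twice_optimum by blast

end
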